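(* Let $g_1,g_2\in\mathcal{G}_0$ with $g_2(x)>0$ for $x\in(0,1)$. Suppose the limit $L=\lim_{x\to0^+}g_1(x)/g_2(x)$ exists and is finite. Then for every finite partition $\mathcal{P}$ with $h(g_2,\mathcal{P})<\infty$ we have $h(g_1,\mathcal{P})=L\cdot h(g_2,\mathcal{P})$.
   Context: $\mathcal{G}_0$ is the set of concave functions $g:[0,1]\to\mathbb{R}$ with $g(0)=\lim_{x\to0^+}g(x)=0$. $T$ is a measure-preserving map of a probability space $(X,\Sigma,\mu)$. For a finite measurable partition $\mathcal{P}$, let $\mathcal{P}_n=\bigvee_{i=0}^{n-1}T^{-i}\mathcal{P}$, $H(g,\mathcal{P})=\sum_{A\in\mathcal{P}}g(\mu(A))$, and $h(g,\mathcal{P})=\limsup_{n\to\infty}\frac1nH(g,\mathcal{P}_n)$. *)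

theory Defs
  imports "HOL-Probability.Probability"
begin

definition G0 :: "(real \<Rightarrow> real) set" where
  "G0 = {g. concave_on {0..1} g \<and> g 0 = 0 \<and> (g \<longlongrightarrow> 0) (at_right 0)}"

definition measure_preserving_map :: "'a measure \<Rightarrow> ('a \<Rightarrow> 'a) \<Rightarrow> bool" where
  "measure_preserving_map M T \<longleftrightarrow> T \<in> M \<rightarrow>\<^sub>M M \<and>
     (\<forall>A\<in>sets M. emeasure M (T -` A \<inter> space M) = emeasure M A)"

definition finite_partition :: "'a measure \<Rightarrow> 'a set set \<Rightarrow> bool" where
  "finite_partition M P \<longleftrightarrow> finite P \<and> P \<subseteq> sets M \<and> disjoint P \<and> \<Union>P = space M"

definition iter_join :: "'a measure \<Rightarrow> ('a \<Rightarrow> 'a) \<Rightarrow> 'a set set \<Rightarrow> nat \<Rightarrow> 'a set set" where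
  "iter_join M T P n =
     {C. C \<noteq> {} \<and> (\<exists>a. (\<forall>i<n. a i \<in> P) \<and>
            C = space M \<inter> (\<Inter>i\<in>{..<n}. (T ^^ i) -` (a i)))}"

definition Hg :: "'a measure \<Rightarrow> (real \<Rightarrow> real) \<Rightarrow> 'a set set \<Rightarrow> real" where
  "Hg M g P = (\<Sum>A\<in>P. g (measure M A))"

definition hg :: "'a measure \<Rightarrow> ('a \<Rightarrow> 'a) \<Rightarrow> (real \<Rightarrow> real) \<Rightarrow> 'a set set \<Rightarrow> ereal" where
  "hg M T g P = limsup (\<lambda>n. ereal (Hg M g (iter_join M T P n) / real n))"

end

theory Submission imports Defs begin

text \<open>
  Since \<open>g\<^sub>1/g\<^sub>2 \<rightarrow> L\<close> at \<open>0\<close>, and concave functions vanishing at \<open>0\<close> are bounded on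
  every \<open>[\<delta>,1]\<close>, for every
  \<open>\<epsilon> > 0\<close> there is \<open>D\<close> with \<open>|g\<^sub>1 x - L g\<^sub>2 x| \<le> \<epsilon> g\<^sub>2 x + D x\<close> on \<open>[0,1]\<close>. Summing over
  the cells of \<open>\<P>\<^sub>n\<close>, whose measures add up to at most \<open>1\<close>, gives
  \<open>|H(g\<^sub>1,\<P>\<^sub>n) - L H(g\<^sub>2,\<P>\<^sub>n)| \<le> \<epsilon> H(g\<^sub>2,\<P>\<^sub>n) + D\<close>. After dividing by \<open>n\<close>, finiteness of
  \<open>h(g\<^sub>2,\<P>)\<close> makes the difference of the normalised entropies tend to \<open>0\<close>. For \<open>L < 0\<close> the
  lower bounds \<open>H(g,\<P>\<^sub>n) \<ge> -|g 1|\<close> (from concavity, \<open>x g(1) \<le> g(x)\<close>) then force both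
  entropies to \<open>0\<close>. The argument works for each \<open>n\<close> separately.
\<close>

lemma iter_join_finite:
  assumes "finite P"
  shows "finite (iter_join M T P n)"
proof -
  let ?cell = "\<lambda>a. space M \<inter> (\<Inter>i\<in>{..<n}. (T ^^ i) -` (a i))"
  have "iter_join M T P n \<subseteq> ?cell ` (PiE {..<n} (\<lambda>_. P))"
  proof
    fix C assume "C \<in> iter_join M T P n"
    then obtain a where a: "\<forall>i<n. a i \<in> P" "C = ?cell a"
      unfolding iter_join_def by blast
    then have "C = ?cell (restrict a {..<n})" by auto
    moreover have "restrict a {..<n} \<in> PiE {..<n} (\<lambda>_. P)" using a(1) by auto
    ultimately show "C \<in> ?cell ` (PiE {..<n} (\<lambda>_. P))" by blast
  qed
  moreover have "finite (?cell ` (PiE {..<n} (\<lambda>_. P)))"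
    using assms by (intro finite_imageI finite_PiE) auto
  ultimately show ?thesis by (rule finite_subset)
qed

lemma iter_join_disjoint:
  assumes "disjoint P"
  shows "disjoint (iter_join M T P n)"
proof (rule disjointI)
  fix C C' assume "C \<in> iter_join M T P n" "C' \<in> iter_join M T P n" "C \<noteq> C'"
  then obtain a b where
    a: "\<forall>i<n. a i \<in> P" "C = space M \<inter> (\<Inter>i\<in>{..<n}. (T ^^ i) -` (a i))" and
    b: "\<forall>i<n. b i \<in> P" "C' = space M \<inter> (\<Inter>i\<in>{..<n}. (T ^^ i) -` (b i))"
    unfolding iter_join_def by blast
  with \<open>C \<noteq> C'\<close> obtain i where i: "i < n" "a i \<noteq> b i" by force
  then have "a i \<inter> b i = {}" using assms a(1) b(1) by (meson disjointD)
  then show "C \<inter> C' = {}" using a(2) b(2) i(1) by blast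
qed

lemma (in prob_space) sum_measure_disjoint_le_1:
  assumes "finite Q" "disjoint Q"
  shows "(\<Sum>A\<in>Q. measure M A) \<le> 1"
proof -
  have "(\<Sum>A\<in>Q. measure M A) = (\<Sum>A\<in>Q \<inter> sets M. measure M A)"
    using assms(1) by (intro sum.mono_neutral_right) (auto simp: measure_notin_sets)
  also have "\<dots> = measure M (\<Union>A\<in>Q \<inter> sets M. A)"
    using assms by (intro finite_measure_finite_Union[symmetric])
      (auto simp: disjoint_family_on_def disjoint_def)
  also have "\<dots> \<le> 1" by (rule prob_le_1)
  finally show ?thesis .
qed

lemma concave_on_scale_ge:
  fixes g :: "real \<Rightarrow> real"
  assumes "concave_on {0..1} g" "g 0 = 0" "0 \<le> t" "t \<le> 1" "0 \<le> y" "y \<le> 1"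
  shows "t * g y \<le> g (t * y)"
  using concave_onD[OF assms(1) assms(3,4), of 0 y] assms by simp

lemma concave_on_abs_bound:
  fixes g :: "real \<Rightarrow> real"
  assumes g: "concave_on {0..1} g" "g 0 = 0" and "0 < d" "d \<le> x" "x \<le> 1"
  shows "\<bar>g x\<bar> \<le> \<bar>g d\<bar> / d + \<bar>g 1\<bar>"
proof -
  have "x * (- \<bar>g 1\<bar>) \<le> x * g 1" using assms by (intro mult_left_mono) auto
  also have "x * g 1 \<le> g x" using concave_on_scale_ge[OF g, of x 1] assms by simp
  finally have lower: "- \<bar>g 1\<bar> \<le> g x"
    using mult_left_le_one_le[of "\<bar>g 1\<bar>" x] assms by simp
  have "(d / x) * g x \<le> g d" using concave_on_scale_ge[OF g, of "d / x" x] assms by simp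
  then have "d * g x \<le> x * g d" using assms by (simp add: field_simps)
  also have "\<dots> \<le> x * \<bar>g d\<bar>" using assms by (intro mult_left_mono) auto
  also have "\<dots> \<le> \<bar>g d\<bar>" using assms by (intro mult_left_le_one_le) auto
  finally have upper: "g x \<le> \<bar>g d\<bar> / d" using assms by (simp add: pos_le_divide_eq mult.commute)
  have "0 \<le> \<bar>g d\<bar> / d" using assms by simp
  with lower upper show ?thesis by (simp add: abs_le_iff)
qed

lemma concave_on_abs_diff_le_of_ratio_tendsto:
  fixes g1 g2 :: "real \<Rightarrow> real"
  assumes conc: "concave_on {0..1} g1" "g1 0 = 0" "concave_on {0..1} g2" "g2 0 = 0"
    and pos: "\<And>x. 0 < x \<Longrightarrow> x < 1 \<Longrightarrow> g2 x > 0"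
    and lim: "((\<lambda>x. g1 x / g2 x) \<longlongrightarrow> L) (at_right 0)"
    and "\<epsilon> > 0"
  shows "\<exists>D\<ge>0. \<forall>x\<in>{0..1}. \<bar>g1 x - L * g2 x\<bar> \<le> \<epsilon> * g2 x + D * x"
proof -
  have "eventually (\<lambda>x. dist (g1 x / g2 x) L < \<epsilon>) (at_right 0)"
    using lim \<open>\<epsilon> > 0\<close> by (rule tendstoD)
  then obtain b where b: "b > 0" "\<And>y. 0 < y \<Longrightarrow> y < b \<Longrightarrow> \<bar>g1 y / g2 y - L\<bar> < \<epsilon>"
    unfolding eventually_at_right_field dist_real_def by auto
  define d where "d = min b (1/2)"
  have d: "0 < d" "d < 1" "d \<le> b" using b by (auto simp: d_def)
  define B1 where "B1 = \<bar>g1 d\<bar> / d + \<bar>g1 1\<bar>"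
  define B2 where "B2 = \<bar>g2 d\<bar> / d + \<bar>g2 1\<bar>"
  define D where "D = (B1 + \<bar>L\<bar> * B2 + \<epsilon> * B2) / d"
  have B2: "B2 \<ge> 0" using d by (simp add: B2_def)
  have D: "D \<ge> 0" using d B2 \<open>\<epsilon> > 0\<close> by (simp add: D_def B1_def)
  have "\<bar>g1 x - L * g2 x\<bar> \<le> \<epsilon> * g2 x + D * x" if x: "0 \<le> x" "x \<le> 1" for x
  proof -
    \<comment> \<open>near \<open>0\<close> the ratio bound applies; on \<open>[d,1]\<close> the term \<open>D x \<ge> D d\<close> absorbs everything\<close>
    consider "x = 0" | "0 < x" "x < d" | "d \<le> x" using x by force
    then show ?thesis
    proof cases
      case 1
      then show ?thesis using conc by simp
    next
      case 2
      have "g2 x > 0" using pos 2 d by simp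
      have "g1 x - L * g2 x = (g1 x / g2 x - L) * g2 x"
        using \<open>g2 x > 0\<close> by (simp add: field_simps)
      then have "\<bar>g1 x - L * g2 x\<bar> = \<bar>g1 x / g2 x - L\<bar> * g2 x"
        using \<open>g2 x > 0\<close> by (simp add: abs_mult)
      also have "\<dots> \<le> \<epsilon> * g2 x"
        using b(2)[of x] 2 d \<open>g2 x > 0\<close> by (intro mult_right_mono) auto
      also have "\<dots> \<le> \<epsilon> * g2 x + D * x" using D 2 by simp
      finally show ?thesis .
    next
      case 3
      have "\<bar>g1 x\<bar> \<le> B1" "\<bar>g2 x\<bar> \<le> B2"
        unfolding B1_def B2_def using concave_on_abs_bound conc d(1) 3 x(2) by blast+
      have "\<bar>g1 x - L * g2 x\<bar> \<le> \<bar>g1 x\<bar> + \<bar>L\<bar> * \<bar>g2 x\<bar>"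
        using abs_triangle_ineq4[of "g1 x" "L * g2 x"] by (simp add: abs_mult)
      also have "\<dots> \<le> B1 + \<bar>L\<bar> * B2"
        using \<open>\<bar>g1 x\<bar> \<le> B1\<close> \<open>\<bar>g2 x\<bar> \<le> B2\<close> by (intro add_mono mult_left_mono) auto
      also have "\<dots> = D * d - \<epsilon> * B2" using d by (simp add: D_def)
      also have "\<dots> \<le> D * x - \<epsilon> * B2" using D 3 by (simp add: mult_left_mono)
      also have "\<dots> \<le> \<epsilon> * g2 x + D * x"
        using \<open>\<bar>g2 x\<bar> \<le> B2\<close> \<open>\<epsilon> > 0\<close> mult_left_mono[of "- B2" "g2 x" \<epsilon>] by simp
      finally show ?thesis .
    qed
  qed
  with D show ?thesis by auto
qed

lemma Hg_ge_neg_abs: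
  assumes "prob_space M" "finite Q" "disjoint Q"
    and g: "concave_on {0..1} g" "g 0 = 0"
  shows "- \<bar>g 1\<bar> \<le> Hg M g Q"
proof -
  have S: "0 \<le> (\<Sum>A\<in>Q. measure M A)" "(\<Sum>A\<in>Q. measure M A) \<le> 1"
    using prob_space.sum_measure_disjoint_le_1 assms(1-3) by (auto intro: sum_nonneg)
  then have "- \<bar>g 1\<bar> \<le> (\<Sum>A\<in>Q. measure M A) * (- \<bar>g 1\<bar>)"
    using mult_left_le_one_le[of "\<bar>g 1\<bar>"] by simp
  also have "\<dots> \<le> (\<Sum>A\<in>Q. measure M A) * g 1" using S by (intro mult_left_mono) auto
  also have "\<dots> = (\<Sum>A\<in>Q. measure M A * g 1)" by (simp add: sum_distrib_right)
  also have "\<dots> \<le> Hg M g Q" unfolding Hg_def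
    using concave_on_scale_ge[OF g, of _ 1] prob_space.prob_le_1[OF assms(1)]
    by (intro sum_mono) auto
  finally show ?thesis .
qed

lemma abs_Hg_diff_le:
  assumes "prob_space M" "finite Q" "disjoint Q" "D \<ge> 0"
    and approx: "\<forall>x\<in>{0..1}. \<bar>g1 x - L * g2 x\<bar> \<le> \<epsilon> * g2 x + D * x"
  shows "\<bar>Hg M g1 Q - L * Hg M g2 Q\<bar> \<le> \<epsilon> * Hg M g2 Q + D"
proof -
  have "\<bar>Hg M g1 Q - L * Hg M g2 Q\<bar> = \<bar>\<Sum>A\<in>Q. g1 (measure M A) - L * g2 (measure M A)\<bar>"
    by (simp add: Hg_def sum_subtractf sum_distrib_left)
  also have "\<dots> \<le> (\<Sum>A\<in>Q. \<bar>g1 (measure M A) - L * g2 (measure M A)\<bar>)"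
    by (rule sum_abs)
  also have "\<dots> \<le> (\<Sum>A\<in>Q. \<epsilon> * g2 (measure M A) + D * measure M A)"
    using approx prob_space.prob_le_1[OF assms(1)] by (intro sum_mono) auto
  also have "\<dots> = \<epsilon> * Hg M g2 Q + D * (\<Sum>A\<in>Q. measure M A)"
    by (simp add: Hg_def sum.distrib sum_distrib_left)
  also have "\<dots> \<le> \<epsilon> * Hg M g2 Q + D"
    using prob_space.sum_measure_disjoint_le_1[OF assms(1-3)] \<open>D \<ge> 0\<close>
    by (simp add: mult_left_le)
  finally show ?thesis .
qed

lemma normalised_diff_tendsto_zero:
  fixes A B :: "nat \<Rightarrow> real"
  assumes fin: "limsup (\<lambda>n. ereal (A n / real n)) < \<infinity>"
    and approx: "\<And>\<epsilon>. \<epsilon> > 0 \<Longrightarrow> \<exists>D. \<forall>n. \<bar>B n - L * A n\<bar> \<le> \<epsilon> * A n + D"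
  shows "(\<lambda>n. B n / real n - L * (A n / real n)) \<longlonglongrightarrow> 0"
proof (rule tendstoI)
  fix \<epsilon> :: real assume "\<epsilon> > 0"
  obtain k :: nat where "limsup (\<lambda>n. ereal (A n / real n)) < ereal (real k)"
    using fin less_PInf_Ex_of_nat by auto
  note Limsup_lessD[OF this]
  define r where "r = real k + 1"
  from \<open>\<forall>\<^sub>F n in sequentially. _ < _\<close> have "eventually (\<lambda>n. A n / real n < r) sequentially"
    by (rule eventually_mono) (simp add: r_def)
  have "r > 0" by (simp add: r_def)
  define \<delta> where "\<delta> = \<epsilon> / 2 / r"
  have \<delta>: "\<delta> > 0" "\<delta> * r = \<epsilon> / 2" using \<open>\<epsilon> > 0\<close> \<open>r > 0\<close> by (simp_all add: \<delta>_def)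
  obtain D where D: "\<And>n. \<bar>B n - L * A n\<bar> \<le> \<delta> * A n + D" using approx \<delta>(1) by blast
  have "eventually (\<lambda>n. D / real n < \<epsilon> / 2) sequentially"
    using \<open>\<epsilon> > 0\<close> by (intro order_tendstoD(2)[OF lim_const_over_n]) simp
  with \<open>eventually (\<lambda>n. A n / real n < r) sequentially\<close>
  show "eventually (\<lambda>n. dist (B n / real n - L * (A n / real n)) 0 < \<epsilon>) sequentially"
  proof eventually_elim
    case (elim n)
    have "\<bar>B n / real n - L * (A n / real n)\<bar> = \<bar>B n - L * A n\<bar> / real n"
      by (simp add: abs_divide flip: diff_divide_distrib)
    also have "\<dots> \<le> (\<delta> * A n + D) / real n" by (intro divide_right_mono D) simp
    also have "\<dots> = \<delta> * (A n / real n) + D / real n" by (simp add: add_divide_distrib)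
    also have "\<delta> * (A n / real n) \<le> \<epsilon> / 2"
      using elim \<delta> by (metis less_eq_real_def mult_left_mono)
    finally have "\<bar>B n / real n - L * (A n / real n)\<bar> < \<epsilon>" using elim by linarith
    then show ?case by simp
  qed
qed

lemma tendsto_zero_if_diff_tendsto_zero_neg:
  fixes a b :: "nat \<Rightarrow> real"
  assumes "L < 0" and diff: "(\<lambda>n. b n - L * a n) \<longlonglongrightarrow> 0"
    and a_ge: "\<And>n. - c\<^sub>a / real n \<le> a n" and b_ge: "\<And>n. - c\<^sub>b / real n \<le> b n"
  shows "a \<longlonglongrightarrow> 0"
proof -
  have upper: "a n \<le> (c\<^sub>b / real n + (b n - L * a n)) / (- L)" for n
  proof (rule pos_le_divide_eq[THEN iffD2])
    show "a n * (- L) \<le> c\<^sub>b / real n + (b n - L * a n)" using b_ge[of n] by (simp add: algebra_simps)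
  qed (use \<open>L < 0\<close> in simp)
  have "(\<lambda>n. c\<^sub>b / real n + (b n - L * a n)) \<longlonglongrightarrow> 0 + 0"
    by (rule tendsto_add[OF lim_const_over_n diff])
  then have "(\<lambda>n. (c\<^sub>b / real n + (b n - L * a n)) / (- L)) \<longlonglongrightarrow> (0 + 0) / (- L)"
    using \<open>L < 0\<close> by (intro tendsto_divide tendsto_const) simp_all
  then have "(\<lambda>n. (c\<^sub>b / real n + (b n - L * a n)) / (- L)) \<longlonglongrightarrow> 0" by simp
  then show ?thesis
  proof (rule tendsto_sandwich[OF _ _ lim_const_over_n, rotated 2])
    show "\<forall>\<^sub>F n in sequentially. - c\<^sub>a / real n \<le> a n" using a_ge by simp
    show "\<forall>\<^sub>F n in sequentially. a n \<le> (c\<^sub>b / real n + (b n - L * a n)) / (- L)"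
      using upper by simp
  qed
qed

lemma limsup_normalised_eq_mult:
  fixes A B :: "nat \<Rightarrow> real"
  assumes diff: "(\<lambda>n. B n / real n - L * (A n / real n)) \<longlonglongrightarrow> 0"
    and A_ge: "\<And>n. - c\<^sub>A \<le> A n" and B_ge: "\<And>n. - c\<^sub>B \<le> B n"
  shows "limsup (\<lambda>n. ereal (B n / real n)) = ereal L * limsup (\<lambda>n. ereal (A n / real n))"
proof (cases "L \<ge> 0")
  case True
  have "(\<lambda>n. ereal (B n / real n - L * (A n / real n))) \<longlonglongrightarrow> ereal 0"
    using diff by (rule tendsto_ereal)
  then have "limsup (\<lambda>n. ereal (B n / real n - L * (A n / real n)) + ereal L * ereal (A n / real n))
      = ereal 0 + limsup (\<lambda>n. ereal L * ereal (A n / real n))"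
    by (rule ereal_limsup_lim_add) simp
  also have "\<dots> = ereal L * limsup (\<lambda>n. ereal (A n / real n))"
    using Limsup_ereal_mult_left[OF sequentially_bot True, of "\<lambda>n. ereal (A n / real n)"] by simp
  finally show ?thesis by simp
next
  case False
  have ge: "- c\<^sub>A / real n \<le> A n / real n" "- c\<^sub>B / real n \<le> B n / real n" for n
    by (rule divide_right_mono[OF A_ge] divide_right_mono[OF B_ge], simp)+
  have A0: "(\<lambda>n. A n / real n) \<longlonglongrightarrow> 0"
    using False by (intro tendsto_zero_if_diff_tendsto_zero_neg[OF _ diff ge]) simp
  have "(\<lambda>n. L * (A n / real n) + (B n / real n - L * (A n / real n))) \<longlonglongrightarrow> L * 0 + 0"
    by (rule tendsto_add[OF tendsto_mult[OF tendsto_const A0] diff])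
  then have B0: "(\<lambda>n. B n / real n) \<longlonglongrightarrow> 0" by simp
  have "limsup (\<lambda>n. ereal (A n / real n)) = ereal 0" "limsup (\<lambda>n. ereal (B n / real n)) = ereal 0"
    by (rule lim_imp_Limsup[OF trivial_limit_sequentially tendsto_ereal], fact)+
  then show ?thesis by simp
qed

theorem mainTheorem4:
  fixes M :: "'a measure" and T :: "'a \<Rightarrow> 'a"
    and g1 g2 :: "real \<Rightarrow> real" and L :: real and P :: "'a set set"
  assumes "prob_space M"
    and "measure_preserving_map M T"
    and "g1 \<in> G0" and "g2 \<in> G0"
    and "\<And>x. 0 < x \<Longrightarrow> x < 1 \<Longrightarrow> g2 x > 0"
    and "((\<lambda>x. g1 x / g2 x) \<longlongrightarrow> L) (at_right 0)"
    and "finite_partition M P"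
    and "hg M T g2 P < \<infinity>"
  shows "hg M T g1 P = ereal L * hg M T g2 P"
proof -
  have conc: "concave_on {0..1} g1" "g1 0 = 0" "concave_on {0..1} g2" "g2 0 = 0"
    using assms(3,4) by (auto simp: G0_def)
  define H where "H g n = Hg M g (iter_join M T P n)" for g n
  have Q: "finite (iter_join M T P n)" "disjoint (iter_join M T P n)" for n
    using assms(7) iter_join_finite iter_join_disjoint by (auto simp: finite_partition_def)
  have h: "hg M T g P = limsup (\<lambda>n. ereal (H g n / real n))" for g
    by (simp add: hg_def H_def)
  have "\<exists>D. \<forall>n. \<bar>H g1 n - L * H g2 n\<bar> \<le> \<epsilon> * H g2 n + D" if "\<epsilon> > 0" for \<epsilon>
  proof -
    obtain D where "D \<ge> 0" "\<forall>x\<in>{0..1}. \<bar>g1 x - L * g2 x\<bar> \<le> \<epsilon> * g2 x + D * x"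
      using concave_on_abs_diff_le_of_ratio_tendsto[OF conc assms(5,6) \<open>\<epsilon> > 0\<close>] by blast
    then show ?thesis unfolding H_def using abs_Hg_diff_le[OF assms(1) Q] by blast
  qed
  then have "(\<lambda>n. H g1 n / real n - L * (H g2 n / real n)) \<longlonglongrightarrow> 0"
    using assms(8) by (intro normalised_diff_tendsto_zero) (simp_all add: h)
  moreover have "- \<bar>g 1\<bar> \<le> H g n" if "concave_on {0..1} g" "g 0 = 0" for g n
    unfolding H_def using Hg_ge_neg_abs[OF assms(1) Q that] .
  ultimately show ?thesis
    unfolding h using conc by (intro limsup_normalised_eq_mult) auto
qed

end
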